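(* Let $k,c_1$ be real constants and let $F_2,F_3,N$ be smooth functions of $\theta$ on an interval satisfying $$N''+N=3F_3',\quad kN=(3F_2-c_1)F_2',\quad 2NF_2=(3F_2-c_1)F_3'+N'F_2',\quad 3NF_3=N'F_3'$$ (primes denote $d/d\theta$). In polar coordinates $x=r\cos\theta$, $y=r\sin\theta$ ($r>0$, $\theta$ in that interval), let $$V=\frac kr+\frac{F_2(\theta)}{r^2}+\frac{F_3(\theta)}{r^3}.$$ Then $$J=p_\theta^3+N(\theta)p_r+\Big(\frac1rN'(\theta)+3F_2(\theta)-c_1\Big)p_\theta$$ is a first integral of $\ddot x=-V_{,x}$, $\ddot y=-V_{,y}$, where $p_r=\dot r$ and $p_\theta=r^2\dot\theta=x\dot y-y\dot x$.
   Context: A first integral is a function of $(t,x,y,\dot x,\dot y)$ whose total time derivative vanishes along every solution of the given equations of motion. *)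

theory Defs
  imports "HOL-Analysis.Analysis"
begin

definition smooth_on :: "real set \<Rightarrow> (real \<Rightarrow> real) \<Rightarrow> bool" where
  "smooth_on I f \<longleftrightarrow> (\<forall>n. \<forall>x\<in>I. ((deriv ^^ n) f) differentiable (at x))"

text \<open>Local polar angle of the point (xi, eta), the branch near the reference angle th0.\<close>
definition loc_angle :: "real \<Rightarrow> real \<Rightarrow> real \<Rightarrow> real" where
  "loc_angle th0 xi eta = th0 + Arg (Complex xi eta / cis th0)"

definition Vpot :: "real \<Rightarrow> (real \<Rightarrow> real) \<Rightarrow> (real \<Rightarrow> real) \<Rightarrow> real \<Rightarrow> real \<Rightarrow> real \<Rightarrow> real" where
  "Vpot k F2 F3 th0 xi eta =
     (let r = sqrt (xi^2 + eta^2); th = loc_angle th0 xi eta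
      in k / r + F2 th / r^2 + F3 th / r^3)"

end

theory Submission
  imports Defs
begin

text \<open>In polar coordinates the equations of motion read
  \<open>r' = p\<^sub>r\<close>, \<open>\<theta>' = p\<^sub>\<theta> / r\<^sup>2\<close>, \<open>p\<^sub>r' = p\<^sub>\<theta>\<^sup>2 / r\<^sup>3 - \<partial>V/\<partial>r\<close>, \<open>p\<^sub>\<theta>' = - \<partial>V/\<partial>\<theta>\<close>;
  they follow by differentiating the local branch of the polar angle, which near a direction
  \<open>\<theta>\<^sub>0\<close> is \<open>\<theta>\<^sub>0 + arctan\<close> of the ratio of the rotated coordinates.
  Along these equations the \<open>p\<^sub>\<theta> p\<^sub>r\<close> terms of \<open>J'\<close> cancel, and what remains is
  \<open>p\<^sub>\<theta>\<^sup>2/r\<^sup>3 (N'' + N - 3F\<^sub>3') + (kN - (3F\<^sub>2 - c\<^sub>1)F\<^sub>2')/r\<^sup>2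
   + (2NF\<^sub>2 - (3F\<^sub>2 - c\<^sub>1)F\<^sub>3' - N'F\<^sub>2')/r\<^sup>3 + (3NF\<^sub>3 - N'F\<^sub>3')/r\<^sup>4\<close>,
  each bracket vanishing by one of the four hypotheses.\<close>

lemma loc_angle_eq_arctan:
  assumes "0 < \<xi> * cos th0 + \<eta> * sin th0"
  shows "loc_angle th0 \<xi> \<eta> =
    th0 + arctan ((\<eta> * cos th0 - \<xi> * sin th0) / (\<xi> * cos th0 + \<eta> * sin th0))"
proof -
  have "(\<xi> * cos th0 + \<eta> * sin th0) * cos th0 - (\<eta> * cos th0 - \<xi> * sin th0) * sin th0
      = \<xi> * ((sin th0)^2 + (cos th0)^2)"
    "(\<xi> * cos th0 + \<eta> * sin th0) * sin th0 + (\<eta> * cos th0 - \<xi> * sin th0) * cos th0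
      = \<eta> * ((sin th0)^2 + (cos th0)^2)"
    by (simp_all only: power2_eq_square algebra_simps)
  then have "Complex (\<xi> * cos th0 + \<eta> * sin th0) (\<eta> * cos th0 - \<xi> * sin th0) * cis th0 = Complex \<xi> \<eta>"
    by (simp add: complex_eq_iff)
  then have "Complex \<xi> \<eta> / cis th0 = Complex (\<xi> * cos th0 + \<eta> * sin th0) (\<eta> * cos th0 - \<xi> * sin th0)"
    by (metis cis_neq_zero nonzero_mult_div_cancel_right)
  then show ?thesis
    using assms by (simp add: loc_angle_def arg_conv_arctan)
qed

lemma loc_angle_of_polar:
  assumes "R > 0" "\<bar>\<phi> - th0\<bar> < pi / 2"
  shows "loc_angle th0 (R * cos \<phi>) (R * sin \<phi>) = \<phi>"
proof -
  have bounds: "- (pi / 2) < \<phi> - th0" "\<phi> - th0 < pi / 2"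
    using assms(2) unfolding abs_less_iff by auto
  have a: "R * cos \<phi> * cos th0 + R * sin \<phi> * sin th0 = R * cos (\<phi> - th0)"
    and b: "R * sin \<phi> * cos th0 - R * cos \<phi> * sin th0 = R * sin (\<phi> - th0)"
    by (simp_all add: cos_diff sin_diff algebra_simps)
  have "0 < R * cos (\<phi> - th0)"
    using assms(1) cos_gt_zero_pi[OF bounds] by simp
  then have "loc_angle th0 (R * cos \<phi>) (R * sin \<phi>) = th0 + arctan (R * sin (\<phi> - th0) / (R * cos (\<phi> - th0)))"
    by (subst loc_angle_eq_arctan) (simp_all only: a b)
  also have "\<dots> = th0 + arctan (tan (\<phi> - th0))"
    using assms(1) by (simp add: tan_def)
  also have "\<dots> = \<phi>"
    using arctan_tan[OF bounds] by simp
  finally show ?thesis .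
qed

lemma has_real_derivative_loc_angle:
  fixes p q :: "real \<Rightarrow> real"
  assumes p: "(p has_real_derivative p') (at w)" and q: "(q has_real_derivative q') (at w)"
    and pos: "0 < p w * cos th0 + q w * sin th0"
  shows "((\<lambda>s. loc_angle th0 (p s) (q s)) has_real_derivative
           (p w * q' - q w * p') / ((p w)^2 + (q w)^2)) (at w)"
proof -
  define a where "a = (\<lambda>s. p s * cos th0 + q s * sin th0)"
  define b where "b = (\<lambda>s. q s * cos th0 - p s * sin th0)"
  define a' b' where "a' = p' * cos th0 + q' * sin th0" and "b' = q' * cos th0 - p' * sin th0"
  have "isCont a w"
    unfolding a_def using p q by (intro continuous_intros DERIV_isCont)
  then have "eventually (\<lambda>s. 0 < a s) (nhds w)"
    using order_tendstoD(1)[of a "a w" "nhds w" 0] pos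
    unfolding isCont_def tendsto_at_iff_tendsto_nhds by (simp add: a_def)
  then have ev: "eventually (\<lambda>s. loc_angle th0 (p s) (q s) = th0 + arctan (b s / a s)) (nhds w)"
    by eventually_elim (simp add: loc_angle_eq_arctan a_def b_def)
  have da: "(a has_real_derivative a') (at w)"
    unfolding a_def a'_def by (auto intro!: derivative_eq_intros p q)
  have db: "(b has_real_derivative b') (at w)"
    unfolding b_def b'_def by (auto intro!: derivative_eq_intros p q)
  have "((\<lambda>s. th0 + arctan (b s / a s)) has_real_derivative
      inverse (1 + (b w / a w)^2) * ((b' * a w - b w * a') / (a w * a w))) (at w)"
    using DERIV_add[OF DERIV_const DERIV_chain2[OF DERIV_arctan DERIV_divide[OF db da]]] pos
    by (simp add: a_def)
  also have "inverse (1 + (b w / a w)^2) * ((b' * a w - b w * a') / (a w * a w))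
     = (b' * a w - b w * a') / ((a w)^2 + (b w)^2)"
  proof -
    have "a w > 0" using pos by (simp add: a_def)
    then have "inverse (1 + (b w / a w)^2) = (a w)^2 / ((a w)^2 + (b w)^2)"
      by (simp add: field_simps)
    with \<open>a w > 0\<close> show ?thesis by (simp add: power2_eq_square)
  qed
  also have "b' * a w - b w * a' = (p w * q' - q w * p') * ((sin th0)^2 + (cos th0)^2)"
    unfolding a_def b_def a'_def b'_def by (simp only: power2_eq_square algebra_simps)
  also have "(a w)^2 + (b w)^2 = ((p w)^2 + (q w)^2) * ((sin th0)^2 + (cos th0)^2)"
    unfolding a_def b_def by (simp only: power2_eq_square algebra_simps)
  finally have "((\<lambda>s. th0 + arctan (b s / a s)) has_real_derivative
      (p w * q' - q w * p') / ((p w)^2 + (q w)^2)) (at w)"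
    by (simp only: sin_cos_squared_add mult_1_right)
  then show ?thesis
    by (rule DERIV_cong_ev[OF refl ev refl, THEN iffD2])
qed

lemma has_real_derivative_radius:
  fixes p q :: "real \<Rightarrow> real"
  assumes p: "(p has_real_derivative p') (at w)" and q: "(q has_real_derivative q') (at w)"
    and pos: "0 < (p w)^2 + (q w)^2"
  shows "((\<lambda>s. sqrt ((p s)^2 + (q s)^2)) has_real_derivative
           (p w * p' + q w * q') / sqrt ((p w)^2 + (q w)^2)) (at w)"
proof -
  have sum: "((\<lambda>s. (p s)^2 + (q s)^2) has_real_derivative 2 * (p w * p' + q w * q')) (at w)"
    using DERIV_add[OF DERIV_power[OF p, of 2] DERIV_power[OF q, of 2]]
    by (simp add: algebra_simps)
  have cancel: "inverse z / 2 * (2 * u) = u / z" for z u :: real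
    by (simp add: field_simps)
  from DERIV_chain2[OF DERIV_real_sqrt[OF pos] sum] show ?thesis
    by (simp only: cancel)
qed

lemma has_real_derivative_Vpot:
  fixes p q :: "real \<Rightarrow> real"
  assumes p: "(p has_real_derivative p') (at w)" and q: "(q has_real_derivative q') (at w)"
    and R: "R > 0" and pw: "p w = R * cos th0" and qw: "q w = R * sin th0"
    and F2: "(F2 has_real_derivative d2) (at th0)" and F3: "(F3 has_real_derivative d3) (at th0)"
  shows "((\<lambda>s. Vpot k F2 F3 th0 (p s) (q s)) has_real_derivative
           (- k / R^2 - 2 * F2 th0 / R^3 - 3 * F3 th0 / R^4) * (cos th0 * p' + sin th0 * q')
           + (d2 / R^2 + d3 / R^3) * ((cos th0 * q' - sin th0 * p') / R)) (at w)"
proof -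
  define \<rho> where "\<rho> = (\<lambda>s. sqrt ((p s)^2 + (q s)^2))"
  define \<theta> where "\<theta> = (\<lambda>s. loc_angle th0 (p s) (q s))"
  define \<rho>' \<theta>' where "\<rho>' = cos th0 * p' + sin th0 * q'" and "\<theta>' = (cos th0 * q' - sin th0 * p') / R"
  have pq: "(p w)^2 + (q w)^2 = R^2"
    unfolding pw qw by (simp add: power_mult_distrib flip: distrib_left)
  have "p w * cos th0 + q w * sin th0 = R * ((sin th0)^2 + (cos th0)^2)"
    unfolding pw qw by (simp only: power2_eq_square algebra_simps)
  then have radial: "p w * cos th0 + q w * sin th0 = R"
    by simp
  have \<rho>w: "\<rho> w = R"
    unfolding \<rho>_def pq using R by simp
  have \<theta>w: "\<theta> w = th0"
    unfolding \<theta>_def pw qw using R by (simp add: loc_angle_of_polar)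
  have "p w * p' + q w * q' = R * \<rho>'"
    unfolding pw qw \<rho>'_def by (simp add: algebra_simps)
  then have d\<rho>: "(\<rho> has_real_derivative \<rho>') (at w)"
    using has_real_derivative_radius[OF p q] R unfolding \<rho>_def pq by simp
  have "p w * q' - q w * p' = R * (R * \<theta>')"
    unfolding pw qw \<theta>'_def using R by (simp add: field_simps)
  then have d\<theta>: "(\<theta> has_real_derivative \<theta>') (at w)"
    using has_real_derivative_loc_angle[OF p q, of th0] R radial
    unfolding \<theta>_def pq by (simp add: power2_eq_square)
  have dF2: "((\<lambda>s. F2 (\<theta> s)) has_real_derivative d2 * \<theta>') (at w)"
    using DERIV_chain2[OF _ d\<theta>] F2 \<theta>w by simp
  have dF3: "((\<lambda>s. F3 (\<theta> s)) has_real_derivative d3 * \<theta>') (at w)"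
    using DERIV_chain2[OF _ d\<theta>] F3 \<theta>w by simp
  have "((\<lambda>s. k / \<rho> s + F2 (\<theta> s) / (\<rho> s)^2 + F3 (\<theta> s) / (\<rho> s)^3) has_real_derivative
           - k * \<rho>' / R^2 + d2 * \<theta>' / R^2 - 2 * F2 th0 * \<rho>' / R^3 + d3 * \<theta>' / R^3 - 3 * F3 th0 * \<rho>' / R^4) (at w)"
    using R \<rho>w \<theta>w by (auto intro!: derivative_eq_intros d\<rho> dF2 dF3
        simp: field_simps power2_eq_square power3_eq_cube eval_nat_numeral)
  moreover have "(\<lambda>s. Vpot k F2 F3 th0 (p s) (q s)) =
      (\<lambda>s. k / \<rho> s + F2 (\<theta> s) / (\<rho> s)^2 + F3 (\<theta> s) / (\<rho> s)^3)"
    by (simp add: Vpot_def Let_def \<rho>_def \<theta>_def)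
  moreover have "- k * \<rho>' / R^2 + d2 * \<theta>' / R^2 - 2 * F2 th0 * \<rho>' / R^3 + d3 * \<theta>' / R^3 - 3 * F3 th0 * \<rho>' / R^4
      = (- k / R^2 - 2 * F2 th0 / R^3 - 3 * F3 th0 / R^4) * \<rho>' + (d2 / R^2 + d3 / R^3) * \<theta>'"
    by (simp add: algebra_simps)
  ultimately show ?thesis
    unfolding \<rho>'_def \<theta>'_def by simp
qed

lemma has_real_derivative_polar_angle:
  fixes x y r \<theta> :: "real \<Rightarrow> real"
  assumes T: "open T" "t \<in> T" and \<theta>_cont: "continuous_on T \<theta>"
    and x: "(x has_real_derivative x') (at t)" and y: "(y has_real_derivative y') (at t)"
    and r_pos: "\<And>s. s \<in> T \<Longrightarrow> r s > 0"
    and polar_x: "\<And>s. s \<in> T \<Longrightarrow> x s = r s * cos (\<theta> s)"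
    and polar_y: "\<And>s. s \<in> T \<Longrightarrow> y s = r s * sin (\<theta> s)"
  shows "(\<theta> has_real_derivative (x t * y' - y t * x') / (r t)^2) (at t)"
proof -
  have "isCont \<theta> t"
    using \<theta>_cont T continuous_on_eq_continuous_at by blast
  then have "(\<theta> \<longlongrightarrow> \<theta> t) (nhds t)"
    by (simp add: isCont_def tendsto_at_iff_tendsto_nhds)
  then have "eventually (\<lambda>s. dist (\<theta> s) (\<theta> t) < pi / 2) (nhds t)"
    by (rule tendstoD) simp
  then have "eventually (\<lambda>s. \<bar>\<theta> s - \<theta> t\<bar> < pi / 2) (nhds t)"
    by (simp add: dist_real_def)
  moreover have "eventually (\<lambda>s. s \<in> T) (nhds t)"
    using T by (rule eventually_nhds_in_open)
  ultimately have ev: "eventually (\<lambda>s. loc_angle (\<theta> t) (x s) (y s) = \<theta> s) (nhds t)"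
    by eventually_elim (simp add: polar_x polar_y r_pos loc_angle_of_polar)
  have "x t * cos (\<theta> t) + y t * sin (\<theta> t) = r t * ((sin (\<theta> t))^2 + (cos (\<theta> t))^2)"
    using T by (simp only: polar_x polar_y power2_eq_square algebra_simps)
  then have "0 < x t * cos (\<theta> t) + y t * sin (\<theta> t)"
    using r_pos T by simp
  moreover have "(x t)^2 + (y t)^2 = (r t)^2"
    using T by (simp add: polar_x polar_y power_mult_distrib flip: distrib_left)
  ultimately have "((\<lambda>s. loc_angle (\<theta> t) (x s) (y s)) has_real_derivative (x t * y' - y t * x') / (r t)^2) (at t)"
    using has_real_derivative_loc_angle[OF x y] by simp
  then show ?thesis
    by (rule DERIV_cong_ev[OF refl ev refl, THEN iffD1])
qed

lemma Vpot_angular_radial_derivatives: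
  assumes R: "R > 0" and X: "X = R * cos \<phi>" and Y: "Y = R * sin \<phi>"
    and F2: "(F2 has_real_derivative d2) (at \<phi>)" and F3: "(F3 has_real_derivative d3) (at \<phi>)"
  shows "X * deriv (\<lambda>\<eta>. Vpot k F2 F3 \<phi> X \<eta>) Y - Y * deriv (\<lambda>\<xi>. Vpot k F2 F3 \<phi> \<xi> Y) X
           = d2 / R^2 + d3 / R^3"
    and "X * deriv (\<lambda>\<xi>. Vpot k F2 F3 \<phi> \<xi> Y) X + Y * deriv (\<lambda>\<eta>. Vpot k F2 F3 \<phi> X \<eta>) Y
           = - k / R - 2 * F2 \<phi> / R^2 - 3 * F3 \<phi> / R^3"
proof -
  define V\<^sub>r V\<^sub>\<theta> where "V\<^sub>r = - k / R^2 - 2 * F2 \<phi> / R^3 - 3 * F3 \<phi> / R^4"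
    and "V\<^sub>\<theta> = d2 / R^2 + d3 / R^3"
  have "((\<lambda>\<xi>. Vpot k F2 F3 \<phi> \<xi> Y) has_real_derivative V\<^sub>r * cos \<phi> - V\<^sub>\<theta> * (sin \<phi> / R)) (at X)"
    using has_real_derivative_Vpot[OF DERIV_ident DERIV_const R X Y F2 F3, of k]
    unfolding V\<^sub>r_def V\<^sub>\<theta>_def by simp
  then have V\<^sub>x: "deriv (\<lambda>\<xi>. Vpot k F2 F3 \<phi> \<xi> Y) X = V\<^sub>r * cos \<phi> - V\<^sub>\<theta> * (sin \<phi> / R)"
    by (rule DERIV_imp_deriv)
  have "((\<lambda>\<eta>. Vpot k F2 F3 \<phi> X \<eta>) has_real_derivative V\<^sub>r * sin \<phi> + V\<^sub>\<theta> * (cos \<phi> / R)) (at Y)"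
    using has_real_derivative_Vpot[OF DERIV_const DERIV_ident R X Y F2 F3, of k]
    unfolding V\<^sub>r_def V\<^sub>\<theta>_def by simp
  then have V\<^sub>y: "deriv (\<lambda>\<eta>. Vpot k F2 F3 \<phi> X \<eta>) Y = V\<^sub>r * sin \<phi> + V\<^sub>\<theta> * (cos \<phi> / R)"
    by (rule DERIV_imp_deriv)
  have alg: "R * c * (V\<^sub>r * s + V\<^sub>\<theta> * (c / R)) - R * s * (V\<^sub>r * c - V\<^sub>\<theta> * (s / R))
      = V\<^sub>\<theta> * (s^2 + c^2)"
    "R * c * (V\<^sub>r * c - V\<^sub>\<theta> * (s / R)) + R * s * (V\<^sub>r * s + V\<^sub>\<theta> * (c / R))
      = R * V\<^sub>r * (s^2 + c^2)" for c s
    using R by (simp_all add: field_simps power2_eq_square)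
  have "R * V\<^sub>r = - k / R - 2 * F2 \<phi> / R^2 - 3 * F3 \<phi> / R^3"
    using R by (simp add: V\<^sub>r_def field_simps power2_eq_square power3_eq_cube eval_nat_numeral)
  moreover have "X * deriv (\<lambda>\<eta>. Vpot k F2 F3 \<phi> X \<eta>) Y - Y * deriv (\<lambda>\<xi>. Vpot k F2 F3 \<phi> \<xi> Y) X = V\<^sub>\<theta>"
    "X * deriv (\<lambda>\<xi>. Vpot k F2 F3 \<phi> \<xi> Y) X + Y * deriv (\<lambda>\<eta>. Vpot k F2 F3 \<phi> X \<eta>) Y = R * V\<^sub>r"
    unfolding V\<^sub>x V\<^sub>y unfolding X Y by (simp_all only: alg sin_cos_squared_add mult_1_right)
  ultimately show "X * deriv (\<lambda>\<eta>. Vpot k F2 F3 \<phi> X \<eta>) Y - Y * deriv (\<lambda>\<xi>. Vpot k F2 F3 \<phi> \<xi> Y) X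
           = d2 / R^2 + d3 / R^3"
    and "X * deriv (\<lambda>\<xi>. Vpot k F2 F3 \<phi> \<xi> Y) X + Y * deriv (\<lambda>\<eta>. Vpot k F2 F3 \<phi> X \<eta>) Y
           = - k / R - 2 * F2 \<phi> / R^2 - 3 * F3 \<phi> / R^3"
    by (simp_all add: V\<^sub>\<theta>_def)
qed

lemma has_real_derivative_radial_velocity:
  fixes x y :: "real \<Rightarrow> real"
  assumes T: "open T" "t \<in> T"
    and x: "\<And>s. s \<in> T \<Longrightarrow> (x has_real_derivative deriv x s) (at s)"
    and y: "\<And>s. s \<in> T \<Longrightarrow> (y has_real_derivative deriv y s) (at s)"
    and x2: "(deriv x has_real_derivative x'') (at t)" and y2: "(deriv y has_real_derivative y'') (at t)"
    and pos: "\<And>s. s \<in> T \<Longrightarrow> 0 < (x s)^2 + (y s)^2"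
  shows "((\<lambda>s. deriv (\<lambda>u. sqrt ((x u)^2 + (y u)^2)) s) has_real_derivative
           (x t * deriv y t - y t * deriv x t)^2 / (sqrt ((x t)^2 + (y t)^2))^3
           + (x t * x'' + y t * y'') / sqrt ((x t)^2 + (y t)^2)) (at t)"
proof -
  define r Q P where "r = (\<lambda>u. sqrt ((x u)^2 + (y u)^2))"
    and "Q = (\<lambda>s. x s * deriv x s + y s * deriv y s)"
    and "P = x t * deriv y t - y t * deriv x t"
  have dr: "(r has_real_derivative Q s / r s) (at s)" if "s \<in> T" for s
    unfolding r_def Q_def using has_real_derivative_radius[OF x y pos] that by simp
  have "eventually (\<lambda>s. s \<in> T) (nhds t)"
    using T by (rule eventually_nhds_in_open)
  then have ev: "eventually (\<lambda>s. Q s / r s = deriv r s) (nhds t)"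
    by eventually_elim (simp add: DERIV_imp_deriv[OF dr])
  have dQ: "(Q has_real_derivative (deriv x t)^2 + (deriv y t)^2 + (x t * x'' + y t * y'')) (at t)"
    unfolding Q_def using T
    by (auto intro!: derivative_eq_intros x y x2 y2 simp: power2_eq_square)
  have r_pos: "r t > 0"
    using pos T by (simp add: r_def)
  have lagrange: "((deriv x t)^2 + (deriv y t)^2) * (r t)^2 = P^2 + (Q t)^2"
    using pos T by (simp add: r_def P_def Q_def power2_eq_square algebra_simps)
  have "((\<lambda>s. Q s / r s) has_real_derivative
           (((deriv x t)^2 + (deriv y t)^2 + (x t * x'' + y t * y'')) * r t - Q t * (Q t / r t)) / (r t * r t)) (at t)"
    using DERIV_divide[OF dQ dr[OF T(2)]] r_pos by simp
  also have "(((deriv x t)^2 + (deriv y t)^2 + (x t * x'' + y t * y'')) * r t - Q t * (Q t / r t)) / (r t * r t)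
      = P^2 / (r t)^3 + (x t * x'' + y t * y'') / r t"
    using r_pos lagrange by (simp add: field_simps power2_eq_square power3_eq_cube)
  finally have "((\<lambda>s. Q s / r s) has_real_derivative P^2 / (r t)^3 + (x t * x'' + y t * y'') / r t) (at t)" .
  then have "(deriv r has_real_derivative P^2 / (r t)^3 + (x t * x'' + y t * y'') / r t) (at t)"
    by (rule DERIV_cong_ev[OF refl ev refl, THEN iffD1])
  then show ?thesis
    by (simp only: r_def P_def)
qed

lemma first_integral_polar:
  fixes r \<theta> p\<^sub>r p\<^sub>\<theta> F2 F3 N :: "real \<Rightarrow> real"
  assumes r: "(r has_real_derivative p\<^sub>r t) (at t)"
    and \<theta>: "(\<theta> has_real_derivative p\<^sub>\<theta> t / (r t)^2) (at t)"
    and p\<^sub>r: "(p\<^sub>r has_real_derivative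
           (p\<^sub>\<theta> t)^2 / (r t)^3 + k / (r t)^2 + 2 * F2 (\<theta> t) / (r t)^3 + 3 * F3 (\<theta> t) / (r t)^4) (at t)"
    and p\<^sub>\<theta>: "(p\<^sub>\<theta> has_real_derivative - (deriv F2 (\<theta> t) / (r t)^2 + deriv F3 (\<theta> t) / (r t)^3)) (at t)"
    and r_pos: "r t > 0"
    and F2: "(F2 has_real_derivative deriv F2 (\<theta> t)) (at (\<theta> t))"
    and N: "(N has_real_derivative deriv N (\<theta> t)) (at (\<theta> t))"
    and N': "(deriv N has_real_derivative deriv (deriv N) (\<theta> t)) (at (\<theta> t))"
    and eq1: "deriv (deriv N) (\<theta> t) + N (\<theta> t) = 3 * deriv F3 (\<theta> t)"
    and eq2: "k * N (\<theta> t) = (3 * F2 (\<theta> t) - c1) * deriv F2 (\<theta> t)"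
    and eq3: "2 * N (\<theta> t) * F2 (\<theta> t) = (3 * F2 (\<theta> t) - c1) * deriv F3 (\<theta> t) + deriv N (\<theta> t) * deriv F2 (\<theta> t)"
    and eq4: "3 * N (\<theta> t) * F3 (\<theta> t) = deriv N (\<theta> t) * deriv F3 (\<theta> t)"
  shows "((\<lambda>s. (p\<^sub>\<theta> s)^3 + N (\<theta> s) * p\<^sub>r s + (deriv N (\<theta> s) / r s + 3 * F2 (\<theta> s) - c1) * p\<^sub>\<theta> s)
           has_real_derivative 0) (at t)"
proof -
  define \<phi> \<rho> u p where "\<phi> = \<theta> t" and "\<rho> = r t" and "u = p\<^sub>r t" and "p = p\<^sub>\<theta> t"
  define \<theta>' u' p' where "\<theta>' = p / \<rho>^2"
    and "u' = p^2 / \<rho>^3 + k / \<rho>^2 + 2 * F2 \<phi> / \<rho>^3 + 3 * F3 \<phi> / \<rho>^4"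
    and "p' = - (deriv F2 \<phi> / \<rho>^2 + deriv F3 \<phi> / \<rho>^3)"
  have dr: "(r has_real_derivative u) (at t)"
    using r by (simp add: u_def)
  have dp\<^sub>r: "(p\<^sub>r has_real_derivative u') (at t)"
    using p\<^sub>r by (simp add: u'_def \<phi>_def \<rho>_def p_def)
  have dp\<^sub>\<theta>: "(p\<^sub>\<theta> has_real_derivative p') (at t)"
    using p\<^sub>\<theta> by (simp add: p'_def \<phi>_def \<rho>_def)
  have dN: "((\<lambda>s. N (\<theta> s)) has_real_derivative deriv N \<phi> * \<theta>') (at t)"
    using DERIV_chain2[OF N \<theta>] by (simp add: \<phi>_def \<theta>'_def p_def \<rho>_def)
  have dN': "((\<lambda>s. deriv N (\<theta> s)) has_real_derivative deriv (deriv N) \<phi> * \<theta>') (at t)"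
    using DERIV_chain2[OF N' \<theta>] by (simp add: \<phi>_def \<theta>'_def p_def \<rho>_def)
  have dF2: "((\<lambda>s. F2 (\<theta> s)) has_real_derivative deriv F2 \<phi> * \<theta>') (at t)"
    using DERIV_chain2[OF F2 \<theta>] by (simp add: \<phi>_def \<theta>'_def p_def \<rho>_def)
  have "((\<lambda>s. (p\<^sub>\<theta> s)^3 + N (\<theta> s) * p\<^sub>r s + (deriv N (\<theta> s) / r s + 3 * F2 (\<theta> s) - c1) * p\<^sub>\<theta> s)
           has_real_derivative
         3 * p^2 * p' + (deriv N \<phi> * \<theta>' * u + N \<phi> * u')
         + ((deriv (deriv N) \<phi> * \<theta>' * \<rho> - deriv N \<phi> * u) / \<rho>^2 + 3 * deriv F2 \<phi> * \<theta>') * p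
         + (deriv N \<phi> / \<rho> + 3 * F2 \<phi> - c1) * p') (at t)"
    using r_pos
    by (auto intro!: derivative_eq_intros dr dp\<^sub>r dp\<^sub>\<theta> dN dN' dF2
        simp flip: \<rho>_def u_def p_def \<phi>_def simp: field_simps power2_eq_square)
  also have "3 * p^2 * p' + (deriv N \<phi> * \<theta>' * u + N \<phi> * u')
         + ((deriv (deriv N) \<phi> * \<theta>' * \<rho> - deriv N \<phi> * u) / \<rho>^2 + 3 * deriv F2 \<phi> * \<theta>') * p
         + (deriv N \<phi> / \<rho> + 3 * F2 \<phi> - c1) * p'
      = p^2 / \<rho>^3 * (deriv (deriv N) \<phi> + N \<phi> - 3 * deriv F3 \<phi>)
        + (k * N \<phi> - (3 * F2 \<phi> - c1) * deriv F2 \<phi>) / \<rho>^2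
        + (2 * N \<phi> * F2 \<phi> - (3 * F2 \<phi> - c1) * deriv F3 \<phi> - deriv N \<phi> * deriv F2 \<phi>) / \<rho>^3
        + (3 * N \<phi> * F3 \<phi> - deriv N \<phi> * deriv F3 \<phi>) / \<rho>^4"
    unfolding \<theta>'_def u'_def p'_def using r_pos \<rho>_def
    by (simp add: field_simps) (simp add: algebra_simps power2_eq_square power3_eq_cube eval_nat_numeral)
  also have "\<dots> = 0"
    using eq1 eq2 eq3 eq4 by (simp add: \<phi>_def)
  finally show ?thesis .
qed

lemma smooth_on_has_real_derivative:
  assumes "smooth_on I f" "\<theta> \<in> I"
  shows "((deriv ^^ n) f has_real_derivative deriv ((deriv ^^ n) f) \<theta>) (at \<theta>)"
  using assms DERIV_deriv_iff_real_differentiable unfolding smooth_on_def by blast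

lemma polar_equations_of_motion:
  fixes x y \<theta> :: "real \<Rightarrow> real"
  defines "r \<equiv> \<lambda>u. sqrt ((x u)^2 + (y u)^2)"
  assumes T: "open T" "t \<in> T" and \<theta>_cont: "continuous_on T \<theta>"
    and x: "\<And>s. s \<in> T \<Longrightarrow> (x has_real_derivative deriv x s) (at s)"
    and y: "\<And>s. s \<in> T \<Longrightarrow> (y has_real_derivative deriv y s) (at s)"
    and x2: "(deriv x has_real_derivative deriv (deriv x) t) (at t)"
    and y2: "(deriv y has_real_derivative deriv (deriv y) t) (at t)"
    and r_pos: "\<And>s. s \<in> T \<Longrightarrow> r s > 0"
    and polar_x: "\<And>s. s \<in> T \<Longrightarrow> x s = r s * cos (\<theta> s)"
    and polar_y: "\<And>s. s \<in> T \<Longrightarrow> y s = r s * sin (\<theta> s)"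
    and F2: "(F2 has_real_derivative d2) (at (\<theta> t))" and F3: "(F3 has_real_derivative d3) (at (\<theta> t))"
    and eom_x: "deriv (deriv x) t = - deriv (\<lambda>\<xi>. Vpot k F2 F3 (\<theta> t) \<xi> (y t)) (x t)"
    and eom_y: "deriv (deriv y) t = - deriv (\<lambda>\<eta>. Vpot k F2 F3 (\<theta> t) (x t) \<eta>) (y t)"
  shows "(r has_real_derivative deriv r t) (at t)"
    and "(\<theta> has_real_derivative (x t * deriv y t - y t * deriv x t) / (r t)^2) (at t)"
    and "(deriv r has_real_derivative (x t * deriv y t - y t * deriv x t)^2 / (r t)^3
           + k / (r t)^2 + 2 * F2 (\<theta> t) / (r t)^3 + 3 * F3 (\<theta> t) / (r t)^4) (at t)"
    and "((\<lambda>s. x s * deriv y s - y s * deriv x s) has_real_derivative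
           - (d2 / (r t)^2 + d3 / (r t)^3)) (at t)"
proof -
  have pos: "0 < (x s)^2 + (y s)^2" if "s \<in> T" for s
    using r_pos[OF that] by (simp add: r_def)
  note grad = Vpot_angular_radial_derivatives[OF r_pos polar_x polar_y F2 F3, OF T(2) T(2) T(2), of k]
  show "(r has_real_derivative deriv r t) (at t)"
    using has_real_derivative_radius[OF x y pos, OF T(2) T(2) T(2)] DERIV_imp_deriv
    by (fastforce simp: r_def)
  show "(\<theta> has_real_derivative (x t * deriv y t - y t * deriv x t) / (r t)^2) (at t)"
    by (rule has_real_derivative_polar_angle[OF T \<theta>_cont x y r_pos polar_x polar_y, OF T(2) T(2)])
  have "x t * deriv (deriv x) t + y t * deriv (deriv y) t
      = k / r t + 2 * F2 (\<theta> t) / (r t)^2 + 3 * F3 (\<theta> t) / (r t)^3"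
    using grad(2) eom_x eom_y by (simp add: algebra_simps)
  then have "(x t * deriv (deriv x) t + y t * deriv (deriv y) t) / r t
      = k / (r t)^2 + 2 * F2 (\<theta> t) / (r t)^3 + 3 * F3 (\<theta> t) / (r t)^4"
    using r_pos[OF T(2)] by (simp add: field_simps power2_eq_square power3_eq_cube eval_nat_numeral)
  moreover have "(deriv r has_real_derivative (x t * deriv y t - y t * deriv x t)^2 / (r t)^3
      + (x t * deriv (deriv x) t + y t * deriv (deriv y) t) / r t) (at t)"
    unfolding r_def by (rule has_real_derivative_radial_velocity[OF T x y x2 y2 pos])
  ultimately show "(deriv r has_real_derivative (x t * deriv y t - y t * deriv x t)^2 / (r t)^3
           + k / (r t)^2 + 2 * F2 (\<theta> t) / (r t)^3 + 3 * F3 (\<theta> t) / (r t)^4) (at t)"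
    by (simp add: add.assoc)
  show "((\<lambda>s. x s * deriv y s - y s * deriv x s) has_real_derivative
           - (d2 / (r t)^2 + d3 / (r t)^3)) (at t)"
    using grad(1) eom_x eom_y T(2)
    by (auto intro!: derivative_eq_intros x y x2 y2 simp: algebra_simps)
qed

theorem mainTheorem9:
  fixes k c1 :: real
    and F2 F3 N :: "real \<Rightarrow> real"
    and I T :: "real set"
    and x y th :: "real \<Rightarrow> real"
  assumes I_open: "open I" and I_int: "is_interval I" and I_ne: "I \<noteq> {}"
    and smF2: "smooth_on I F2" and smF3: "smooth_on I F3" and smN: "smooth_on I N"
    and eq1: "\<forall>\<theta>\<in>I. deriv (deriv N) \<theta> + N \<theta> = 3 * deriv F3 \<theta>"
    and eq2: "\<forall>\<theta>\<in>I. k * N \<theta> = (3 * F2 \<theta> - c1) * deriv F2 \<theta>"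
    and eq3: "\<forall>\<theta>\<in>I. 2 * N \<theta> * F2 \<theta> = (3 * F2 \<theta> - c1) * deriv F3 \<theta> + deriv N \<theta> * deriv F2 \<theta>"
    and eq4: "\<forall>\<theta>\<in>I. 3 * N \<theta> * F3 \<theta> = deriv N \<theta> * deriv F3 \<theta>"
    \<comment> \<open>a solution (x(t), y(t)) on the open time interval T, staying in the region r > 0,
        theta in I, with a continuous choice of polar angle th(t)\<close>
    and T_open: "open T" and T_int: "is_interval T"
    and x_diff: "\<forall>t\<in>T. x differentiable (at t) \<and> deriv x differentiable (at t)"
    and y_diff: "\<forall>t\<in>T. y differentiable (at t) \<and> deriv y differentiable (at t)"
    and th_cont: "continuous_on T th"
    and th_in: "\<forall>t\<in>T. th t \<in> I"
    and r_pos: "\<forall>t\<in>T. sqrt ((x t)^2 + (y t)^2) > 0"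
    and polar_x: "\<forall>t\<in>T. x t = sqrt ((x t)^2 + (y t)^2) * cos (th t)"
    and polar_y: "\<forall>t\<in>T. y t = sqrt ((x t)^2 + (y t)^2) * sin (th t)"
    and eom_x: "\<forall>t\<in>T. deriv (deriv x) t = - deriv (\<lambda>\<xi>. Vpot k F2 F3 (th t) \<xi> (y t)) (x t)"
    and eom_y: "\<forall>t\<in>T. deriv (deriv y) t = - deriv (\<lambda>\<eta>. Vpot k F2 F3 (th t) (x t) \<eta>) (y t)"
  shows "\<forall>t\<in>T.
    ((\<lambda>s. let r = (\<lambda>u. sqrt ((x u)^2 + (y u)^2));
               p_r = deriv r s;
               p_th = x s * deriv y s - y s * deriv x s
           in p_th ^ 3 + N (th s) * p_r
              + (deriv N (th s) / r s + 3 * F2 (th s) - c1) * p_th)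
      has_real_derivative 0) (at t)"
proof
  fix t assume t: "t \<in> T"
  have dx: "(x has_real_derivative deriv x s) (at s)" and dy: "(y has_real_derivative deriv y s) (at s)"
    if "s \<in> T" for s
    using x_diff y_diff that by (simp_all add: DERIV_deriv_iff_real_differentiable)
  have dx2: "(deriv x has_real_derivative deriv (deriv x) t) (at t)"
    and dy2: "(deriv y has_real_derivative deriv (deriv y) t) (at t)"
    using x_diff y_diff t by (simp_all add: DERIV_deriv_iff_real_differentiable)
  have F2: "(F2 has_real_derivative deriv F2 (th t)) (at (th t))"
    and F3: "(F3 has_real_derivative deriv F3 (th t)) (at (th t))"
    and N: "(N has_real_derivative deriv N (th t)) (at (th t))"
    and N': "(deriv N has_real_derivative deriv (deriv N) (th t)) (at (th t))"
    using smooth_on_has_real_derivative[OF _ th_in[rule_format, OF t], of _ 0] smF2 smF3 smN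
      smooth_on_has_real_derivative[OF smN th_in[rule_format, OF t], of 1] by simp_all
  note motion = polar_equations_of_motion[OF T_open t th_cont dx dy dx2 dy2 r_pos[rule_format]
      polar_x[rule_format] polar_y[rule_format] F2 F3 eom_x[rule_format, OF t] eom_y[rule_format, OF t]]
  have "((\<lambda>s. (x s * deriv y s - y s * deriv x s)^3 + N (th s) * deriv (\<lambda>u. sqrt ((x u)^2 + (y u)^2)) s
      + (deriv N (th s) / sqrt ((x s)^2 + (y s)^2) + 3 * F2 (th s) - c1) * (x s * deriv y s - y s * deriv x s))
      has_real_derivative 0) (at t)"
    by (rule first_integral_polar[OF motion r_pos[rule_format, OF t] F2 N N'])
      (use eq1 eq2 eq3 eq4 th_in t in auto)
  then show "((\<lambda>s. let r = (\<lambda>u. sqrt ((x u)^2 + (y u)^2));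
               p_r = deriv r s;
               p_th = x s * deriv y s - y s * deriv x s
           in p_th ^ 3 + N (th s) * p_r
              + (deriv N (th s) / r s + 3 * F2 (th s) - c1) * p_th)
      has_real_derivative 0) (at t)"
    by (simp only: Let_def)
qed

end
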